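(* Let $t$ be a positive integer and let $G$ be a finite graph of NLC-width at most $t$. Then the 2VC-dimension of the hypergraph of balls in $G$ is at most $6t+2$.
   Context: The hypergraph of balls in $G$ has vertex set $V(G)$ and hyperedges all $B_G(c,r)=\{v:\mathrm{dist}_G(c,v)\le r\}$ for $c\in V(G)$ and integers $r$. A set $S\subseteq V(H)$ is 2-shattered by a hypergraph $H$ if for all distinct $s_1,s_2\in S$ there is $e\in E(H)$ with $e\cap S=\{s_1,s_2\}$; the 2VC-dimension of $H$ is the maximum size of a 2-shattered set. An NLC-decomposition of $G$ is a tuple $(T,Q,\alpha,\beta,R)$ where $T$ is a rooted binary tree (each node has at most one left and at most one right child) with leaf set $V(G)$, $Q$ is a finite label set, $\alpha:V(G)\to Q$, $\beta$ assigns to each 2-element subset of $V(T)$ a map $Q\to Q$, and $R$ assigns to each node a subset of $Q\times Q$, such that: (nlc1) if $u$ is an ancestor of $v\ne u$ and $u=u_0,\dots,u_n=v$ is the path between them, then $\beta(\{u_0,u_1\})\circ\cdots\circ\beta(\{u_{n-1},u_n\})=\beta(\{u,v\})$; (nlc2) for distinct $x,y\in V(G)$ with lowest common ancestor $u$, $x$ a descendant of the left child and $y$ of the right child of $u$, $xy\in E(G)$ iff $(\beta(\{u,x\})(\alpha(x)),\beta(\{u,y\})(\alpha(y)))\in R(u)$. The NLC-width of $G$ is the minimum $|Q|$ over NLC-decompositions of $G$. *)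

theory Defs
  imports Main "HOL-Library.Sublist"
begin

definition graph :: "'a set \<Rightarrow> ('a \<Rightarrow> 'a \<Rightarrow> bool) \<Rightarrow> bool" where
  "graph V E \<longleftrightarrow> finite V \<and> (\<forall>x y. E x y \<longrightarrow> x \<in> V \<and> y \<in> V)
     \<and> (\<forall>x y. E x y \<longrightarrow> E y x) \<and> (\<forall>x. \<not> E x x)"

fun walk :: "'a set \<Rightarrow> ('a \<Rightarrow> 'a \<Rightarrow> bool) \<Rightarrow> nat \<Rightarrow> 'a \<Rightarrow> 'a \<Rightarrow> bool" where
  "walk V E 0 c v \<longleftrightarrow> c = v \<and> c \<in> V"
| "walk V E (Suc n) c v \<longleftrightarrow> (\<exists>w. walk V E n c w \<and> E w v \<and> v \<in> V)"

text \<open>Ball B_G(c,r) = {v. dist_G(c,v) \<le> r}; dist_G(c,v) \<le> r iff some walk of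
  length at most r joins c and v (distance is infinite between components).\<close>
definition ball :: "'a set \<Rightarrow> ('a \<Rightarrow> 'a \<Rightarrow> bool) \<Rightarrow> 'a \<Rightarrow> int \<Rightarrow> 'a set" where
  "ball V E c r = {v \<in> V. \<exists>n. int n \<le> r \<and> walk V E n c v}"

definition ball_edges :: "'a set \<Rightarrow> ('a \<Rightarrow> 'a \<Rightarrow> bool) \<Rightarrow> 'a set set" where
  "ball_edges V E = {ball V E c r | c r. c \<in> V}"

definition two_shattered :: "'a set set \<Rightarrow> 'a set \<Rightarrow> bool" where
  "two_shattered H S \<longleftrightarrow>
     (\<forall>s1\<in>S. \<forall>s2\<in>S. s1 \<noteq> s2 \<longrightarrow> (\<exists>e\<in>H. e \<inter> S = {s1, s2}))"

definition vc2_dim :: "'a set \<Rightarrow> 'a set set \<Rightarrow> nat" where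
  "vc2_dim V H = Max {card S | S. S \<subseteq> V \<and> two_shattered H S}"

text \<open>The rooted binary tree T is represented by its node set of addresses:
  a node is the list of left(False)/right(True) steps from the root.  T is a
  finite, prefix-closed set of bool lists containing the root []; the left
  child of u is u@[False], the right child u@[True]; u is an ancestor of v iff
  u is a prefix of v.\<close>
definition tree_leaves :: "bool list set \<Rightarrow> bool list set" where
  "tree_leaves T = {v \<in> T. \<not> (\<exists>w\<in>T. strict_prefix v w)}"

fun comp_path :: "(bool list set \<Rightarrow> nat \<Rightarrow> nat) \<Rightarrow> bool list list \<Rightarrow> nat \<Rightarrow> nat" where
  "comp_path \<beta> (x # y # rest) = \<beta> {x, y} \<circ> comp_path \<beta> (y # rest)"
| "comp_path \<beta> _ = id"

definition tree_path :: "bool list \<Rightarrow> bool list \<Rightarrow> bool list list" where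
  "tree_path u v = map (\<lambda>i. take i v) [length u..<Suc (length v)]"

definition nlc_decomposition ::
  "'a set \<Rightarrow> ('a \<Rightarrow> 'a \<Rightarrow> bool) \<Rightarrow> bool list set \<Rightarrow> ('a \<Rightarrow> bool list) \<Rightarrow> nat set
   \<Rightarrow> ('a \<Rightarrow> nat) \<Rightarrow> (bool list set \<Rightarrow> nat \<Rightarrow> nat) \<Rightarrow> (bool list \<Rightarrow> (nat \<times> nat) set) \<Rightarrow> bool"
  where
  "nlc_decomposition V E T leaf Q \<alpha> \<beta> R \<longleftrightarrow>
     finite T \<and> [] \<in> T \<and> (\<forall>v\<in>T. \<forall>u. prefix u v \<longrightarrow> u \<in> T)
   \<and> bij_betw leaf V (tree_leaves T)
   \<and> finite Q
   \<and> (\<forall>x\<in>V. \<alpha> x \<in> Q)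
   \<and> (\<forall>u\<in>T. \<forall>v\<in>T. u \<noteq> v \<longrightarrow> (\<forall>q\<in>Q. \<beta> {u, v} q \<in> Q))
   \<and> (\<forall>u\<in>T. R u \<subseteq> Q \<times> Q)
   \<comment> \<open>(nlc1)\<close>
   \<and> (\<forall>u\<in>T. \<forall>v\<in>T. strict_prefix u v \<longrightarrow>
        (\<forall>q\<in>Q. comp_path \<beta> (tree_path u v) q = \<beta> {u, v} q))
   \<comment> \<open>(nlc2)\<close>
   \<and> (\<forall>x\<in>V. \<forall>y\<in>V. \<forall>u\<in>T.
        prefix (u @ [False]) (leaf x) \<and> prefix (u @ [True]) (leaf y) \<longrightarrow>
        (E x y \<longleftrightarrow> (\<beta> {u, leaf x} (\<alpha> x), \<beta> {u, leaf y} (\<alpha> y)) \<in> R u))"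

definition nlc_width :: "'a set \<Rightarrow> ('a \<Rightarrow> 'a \<Rightarrow> bool) \<Rightarrow> nat" where
  "nlc_width V E = (LEAST k. \<exists>T leaf Q \<alpha> \<beta> R.
       nlc_decomposition V E T leaf Q \<alpha> \<beta> R \<and> card Q = k)"

end

theory Submission
  imports Defs
begin

(*
  Let t = card Q for an NLC-decomposition and let S be 2-shattered by the balls; we show
  card S <= 3 t.  If card S > 3 t, take a deepest tree node u whose subtree contains more than
  t points of S.  Its children contain at most t each, so A = S \<inter> X, for X the vertices below u,
  has between t + 1 and 2 t points and B = S - X has more than t.  By (nlc1) and (nlc2),
  vertices of X with the same label at u have the same neighbours outside X, so the edges
  between X and V - X are governed by at most t classes on either side.  A walk from a centre
  outside X last enters X through one of these classes, hence a ball centred outside X that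
  contains a point of A contains every point of A that is at most as far from that class.
  Each class has at most one strictly nearest point of A, and card A > t, so some a in A is
  never isolated by a ball centred outside X; symmetrically some b in B is never isolated by a
  ball centred in X.  Then no ball meets S in exactly {a, b}.
*)

lemma graph_sym: "graph V E \<Longrightarrow> E x y \<Longrightarrow> E y x"
  unfolding graph_def by blast

lemma graph_edge_in_vertices: "graph V E \<Longrightarrow> E x y \<Longrightarrow> x \<in> V \<and> y \<in> V"
  unfolding graph_def by blast

lemma walk_in_vertices: "walk V E n x y \<Longrightarrow> x \<in> V \<and> y \<in> V"
  by (induction n arbitrary: y) auto

lemma walk_mono: "walk W E n x y \<Longrightarrow> W \<subseteq> V \<Longrightarrow> walk V E n x y"
  by (induction n arbitrary: y) auto

lemma walk_append: "walk V E n x y \<Longrightarrow> walk V E m y z \<Longrightarrow> walk V E (n + m) x z"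
  by (induction m arbitrary: z) auto

lemma walk_last_entry:
  assumes "walk V E n c a" "c \<notin> W" "a \<in> W"
  shows "\<exists>n1 y x n2. walk V E n1 c y \<and> y \<notin> W \<and> E y x \<and> x \<in> W \<and> walk W E n2 x a
           \<and> n = Suc n1 + n2"
  using assms
proof (induction n arbitrary: a)
  case 0
  then show ?case by simp
next
  case (Suc n)
  then obtain w where w: "walk V E n c w" "E w a" by auto
  show ?case
  proof (cases "w \<in> W")
    case True
    with Suc.IH[OF w(1) Suc.prems(2)] obtain n1 y x n2 where
      "walk V E n1 c y" "y \<notin> W" "E y x" "x \<in> W" "walk W E n2 x w" "n = Suc n1 + n2"
      by blast
    with w(2) Suc.prems(3) show ?thesis
      by (intro exI[of _ n1] exI[of _ y] exI[of _ x] exI[of _ "Suc n2"]) auto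
  next
    case False
    with w Suc.prems(3) show ?thesis
      by (intro exI[of _ n] exI[of _ w] exI[of _ a] exI[of _ 0]) auto
  qed
qed

definition unique_nearest :: "'a set \<Rightarrow> ('a \<Rightarrow> 'a \<Rightarrow> bool) \<Rightarrow> 'a set \<Rightarrow> 'a set \<Rightarrow> 'a \<Rightarrow> bool" where
  "unique_nearest W E C A a \<longleftrightarrow> (\<exists>n. (\<exists>z\<in>C. walk W E n z a) \<and>
     (\<forall>a'\<in>A - {a}. \<forall>z\<in>C. \<forall>m\<le>n. \<not> walk W E m z a'))"

lemma unique_nearest_unique:
  assumes "a \<in> A" "b \<in> A" "unique_nearest W E C A a" "unique_nearest W E C A b"
  shows "a = b"
proof -
  obtain n z where "z \<in> C" "walk W E n z a"
    and a_nearest: "\<forall>a'\<in>A - {a}. \<forall>z\<in>C. \<forall>m\<le>n. \<not> walk W E m z a'"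
    using assms(3) unfolding unique_nearest_def by blast
  obtain n' z' where "z' \<in> C" "walk W E n' z' b"
    and b_nearest: "\<forall>a'\<in>A - {b}. \<forall>z\<in>C. \<forall>m\<le>n'. \<not> walk W E m z a'"
    using assms(4) unfolding unique_nearest_def by blast
  show ?thesis
  proof (rule ccontr)
    assume "a \<noteq> b"
    show False
    proof (cases "n \<le> n'")
      case True
      with b_nearest \<open>z \<in> C\<close> \<open>walk W E n z a\<close> \<open>a \<in> A\<close> \<open>a \<noteq> b\<close> show False by blast
    next
      case False
      with a_nearest \<open>z' \<in> C\<close> \<open>walk W E n' z' b\<close> \<open>b \<in> A\<close> \<open>a \<noteq> b\<close> show False by auto
    qed
  qed
qed

lemma exists_not_unique_nearest:
  assumes "finite \<C>" "card \<C> < card A"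
  shows "\<exists>a\<in>A. \<forall>C\<in>\<C>. \<not> unique_nearest W E C A a"
proof (rule ccontr)
  assume "\<not> ?thesis"
  then obtain f where f: "\<And>a. a \<in> A \<Longrightarrow> f a \<in> \<C> \<and> unique_nearest W E (f a) A a"
    by metis
  have "inj_on f A"
    by (rule inj_onI) (metis f unique_nearest_unique)
  with f have "card A \<le> card \<C>"
    using card_inj_on_le[OF _ _ assms(1)] by blast
  with assms(2) show False by simp
qed

definition entry_classes :: "'a set \<Rightarrow> ('a \<Rightarrow> 'a \<Rightarrow> bool) \<Rightarrow> 'a set \<Rightarrow> 'a set set \<Rightarrow> bool" where
  "entry_classes V E W \<C> \<longleftrightarrow>
     (\<forall>y\<in>V - W. \<forall>x\<in>W. E y x \<longrightarrow> (\<exists>C\<in>\<C>. x \<in> C \<and> (\<forall>z\<in>C \<inter> W. E y z)))"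

lemma ball_from_outside_meets_other:
  assumes "entry_classes V E W \<C>" "W \<subseteq> V" "A \<subseteq> W" "a \<in> A"
    and "\<forall>C\<in>\<C>. \<not> unique_nearest W E C A a"
    and "c \<notin> W" "a \<in> ball V E c r"
  shows "\<exists>a'\<in>A - {a}. a' \<in> ball V E c r"
proof -
  obtain n where walk_a: "walk V E n c a" and "int n \<le> r"
    using assms(7) unfolding ball_def by blast
  then obtain n1 y x n2 where walk_y: "walk V E n1 c y" and "y \<notin> W" "E y x" "x \<in> W"
    and walk_x: "walk W E n2 x a" and n: "n = Suc n1 + n2"
    using walk_last_entry[OF walk_a assms(6)] assms(3,4) by blast
  moreover have "y \<in> V"
    using walk_in_vertices[OF walk_y] by simp
  ultimately obtain C where "C \<in> \<C>" "x \<in> C" and C_adj: "\<forall>z\<in>C \<inter> W. E y z"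
    using assms(1) unfolding entry_classes_def by blast
  then obtain a' z m where a': "a' \<in> A - {a}" and "z \<in> C" "m \<le> n2" and walk_z: "walk W E m z a'"
    using assms(5) walk_x unfolding unique_nearest_def by blast
  have "z \<in> W" "a' \<in> W"
    using walk_in_vertices[OF walk_z] by auto
  with walk_y C_adj \<open>z \<in> C\<close> assms(2) have "walk V E (Suc n1) c z"
    by auto
  then have "walk V E (Suc n1 + m) c a'"
    using walk_mono[OF walk_z assms(2)] by (rule walk_append)
  moreover have "int (Suc n1 + m) \<le> r"
    using \<open>int n \<le> r\<close> n \<open>m \<le> n2\<close> by simp
  ultimately have "a' \<in> ball V E c r"
    using \<open>a' \<in> W\<close> assms(2) unfolding ball_def by blast
  with a' show ?thesis by blast
qed

lemma exists_unisolable_from_outside: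
  assumes "entry_classes V E W \<C>" "finite \<C>" "card \<C> < card A" "W \<subseteq> V" "A \<subseteq> W"
  shows "\<exists>a\<in>A. \<forall>c r. c \<notin> W \<longrightarrow> a \<in> ball V E c r \<longrightarrow> (\<exists>a'\<in>A - {a}. a' \<in> ball V E c r)"
  using exists_not_unique_nearest[OF assms(2,3)] ball_from_outside_meets_other[OF assms(1,4,5)]
  by metis

lemma comp_path_append:
  "comp_path \<beta> (xs @ z # ys) = comp_path \<beta> (xs @ [z]) \<circ> comp_path \<beta> (z # ys)"
proof (induction xs)
  case Nil
  then show ?case by simp
next
  case (Cons x xs)
  then show ?case by (cases xs) (auto simp: comp_assoc)
qed

lemma tree_path_trans:
  assumes "prefix w u" "prefix u v"
  shows "tree_path w v = map (\<lambda>i. take i v) [length w..<length u] @ tree_path u v"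
proof -
  have "length w \<le> length u" "length u \<le> length v"
    using assms by (simp_all add: prefix_length_le)
  then have "[length w..<Suc (length v)] = [length w..<length u] @ [length u..<Suc (length v)]"
    using upt_add_eq_append[of "length w" "length u" "Suc (length v) - length u"] by simp
  then show ?thesis
    unfolding tree_path_def by simp
qed

lemma tree_path_snoc:
  assumes "prefix w u"
  shows "tree_path w u = map (\<lambda>i. take i u) [length w..<length u] @ [u]"
  using prefix_length_le[OF assms] unfolding tree_path_def by simp

lemma tree_path_Cons:
  assumes "prefix u v"
  shows "tree_path u v = u # map (\<lambda>i. take i v) [Suc (length u)..<Suc (length v)]"
proof -
  have "take (length u) v = u"
    using assms by (metis append_eq_conv_conj prefixE)
  then show ?thesis
    using prefix_length_le[OF assms] unfolding tree_path_def by (simp add: upt_conv_Cons del: upt_Suc)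
qed

lemma comp_path_tree_path_trans:
  assumes "prefix w u" "prefix u v"
  shows "comp_path \<beta> (tree_path w v) = comp_path \<beta> (tree_path w u) \<circ> comp_path \<beta> (tree_path u v)"
proof -
  have "take i v = take i u" if "i \<le> length u" for i
    using assms(2) that by (metis prefixE min.absorb1 take_take append_eq_conv_conj)
  then have "map (\<lambda>i. take i v) [length w..<length u] = map (\<lambda>i. take i u) [length w..<length u]"
    by simp
  then show ?thesis
    using tree_path_trans[OF assms] tree_path_snoc[OF assms(1)] tree_path_Cons[OF assms(2)]
    by (metis comp_path_append)
qed

definition points_below :: "('a \<Rightarrow> bool list) \<Rightarrow> 'a set \<Rightarrow> bool list \<Rightarrow> 'a set" where
  "points_below leaf S u = {s \<in> S. prefix u (leaf s)}"

lemma card_points_below_leaf_le: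
  assumes "leaf ` S \<subseteq> tree_leaves T" "inj_on leaf S" "finite S" "u \<in> tree_leaves T"
  shows "card (points_below leaf S u) \<le> 1"
proof -
  have "points_below leaf S u \<subseteq> {s \<in> S. leaf s = u}"
    using assms(1,4) unfolding points_below_def tree_leaves_def strict_prefix_def by blast
  moreover have "card {s \<in> S. leaf s = u} \<le> 1"
    using assms(2,3) by (auto simp: card_le_Suc0_iff_eq inj_on_def)
  ultimately show ?thesis
    using assms(3) card_mono[of "{s \<in> S. leaf s = u}" "points_below leaf S u"] by fastforce
qed

lemma points_below_children:
  assumes "leaf ` S \<subseteq> tree_leaves T" "u \<notin> tree_leaves T"
  shows "points_below leaf S u \<subseteq> points_below leaf S (u @ [False]) \<union> points_below leaf S (u @ [True])"
proof
  fix s assume s: "s \<in> points_below leaf S u"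
  then have "leaf s \<noteq> u"
    using assms unfolding points_below_def by blast
  with s obtain c rest where "s \<in> S" "leaf s = u @ c # rest"
    unfolding points_below_def by (auto simp: prefix_def neq_Nil_conv)
  then show "s \<in> points_below leaf S (u @ [False]) \<union> points_below leaf S (u @ [True])"
    unfolding points_below_def by (cases c) auto
qed

text \<open>A deepest node with more than t points below it works: its children have at most t
  points below them, and for t > 0 it is not a leaf.\<close>

lemma exists_balanced_subtree:
  assumes T: "finite T" "[] \<in> T" "\<And>v u. v \<in> T \<Longrightarrow> prefix u v \<Longrightarrow> u \<in> T"
    and leaf: "leaf ` S \<subseteq> tree_leaves T" "inj_on leaf S"
    and S: "finite S" "0 < t" "t < card S"
  shows "\<exists>u\<in>T - tree_leaves T.
    t < card (points_below leaf S u) \<and> card (points_below leaf S u) \<le> 2 * t"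
proof -
  define U where "U = {u \<in> T. t < card (points_below leaf S u)}"
  have "[] \<in> U"
    using T(2) S(3) unfolding U_def points_below_def by simp
  moreover have fin: "finite (length ` U)"
    using T(1) unfolding U_def by simp
  ultimately have "Max (length ` U) \<in> length ` U"
    by (intro Max_in) auto
  then obtain u where "u \<in> U" and u_max: "length u = Max (length ` U)"
    by (metis imageE)
  then have "u \<in> T" and big: "t < card (points_below leaf S u)"
    unfolding U_def by auto
  have deepest: "length v \<le> length u" if "v \<in> U" for v
    unfolding u_max using Max_ge[OF fin imageI[OF that]] .
  have "u \<notin> tree_leaves T"
    using card_points_below_leaf_le[OF leaf S(1)] big S(2) by fastforce
  have child_small: "card (points_below leaf S (u @ [c])) \<le> t" for c
  proof (cases "u @ [c] \<in> T")
    case True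
    then have "u @ [c] \<notin> U"
      using deepest by fastforce
    with True show ?thesis
      unfolding U_def by simp
  next
    case False
    then have "points_below leaf S (u @ [c]) = {}"
      using T(3) leaf(1) unfolding points_below_def tree_leaves_def by blast
    then show ?thesis by simp
  qed
  have "card (points_below leaf S u)
      \<le> card (points_below leaf S (u @ [False]) \<union> points_below leaf S (u @ [True]))"
    using points_below_children[OF leaf(1) \<open>u \<notin> tree_leaves T\<close>] S(1)
    by (intro card_mono) (auto simp: points_below_def)
  also have "\<dots> \<le> 2 * t"
    using card_Un_le child_small[of False] child_small[of True] by (metis add_mono mult_2 order_trans)
  finally show ?thesis
    using big \<open>u \<in> T\<close> \<open>u \<notin> tree_leaves T\<close> by blast
qed

definition nlc_label :: "(bool list set \<Rightarrow> nat \<Rightarrow> nat) \<Rightarrow> ('a \<Rightarrow> nat) \<Rightarrow> ('a \<Rightarrow> bool list)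
    \<Rightarrow> bool list \<Rightarrow> 'a \<Rightarrow> nat" where
  "nlc_label \<beta> \<alpha> leaf u x = \<beta> {u, leaf x} (\<alpha> x)"

context
  fixes V :: "'a set" and E T leaf Q \<alpha> \<beta> R
  assumes nlc: "nlc_decomposition V E T leaf Q \<alpha> \<beta> R"
begin

lemma nlc_finite_tree: "finite T"
  using nlc unfolding nlc_decomposition_def by simp

lemma nlc_root: "[] \<in> T"
  using nlc unfolding nlc_decomposition_def by simp

lemma nlc_prefix_closed: "v \<in> T \<Longrightarrow> prefix u v \<Longrightarrow> u \<in> T"
  using nlc unfolding nlc_decomposition_def by simp

lemma nlc_bij_leaves: "bij_betw leaf V (tree_leaves T)"
  using nlc unfolding nlc_decomposition_def by simp

lemma nlc_finite_labels: "finite Q"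
  using nlc unfolding nlc_decomposition_def by simp

lemma nlc_initial_label: "x \<in> V \<Longrightarrow> \<alpha> x \<in> Q"
  using nlc unfolding nlc_decomposition_def by simp

lemma nlc_relabel_in_labels:
  "u \<in> T \<Longrightarrow> v \<in> T \<Longrightarrow> u \<noteq> v \<Longrightarrow> q \<in> Q \<Longrightarrow> \<beta> {u, v} q \<in> Q"
  using nlc unfolding nlc_decomposition_def by simp

lemma nlc_comp_path:
  "u \<in> T \<Longrightarrow> v \<in> T \<Longrightarrow> strict_prefix u v \<Longrightarrow> q \<in> Q \<Longrightarrow>
   comp_path \<beta> (tree_path u v) q = \<beta> {u, v} q"
  using nlc unfolding nlc_decomposition_def by simp

lemma nlc_edge:
  "x \<in> V \<Longrightarrow> y \<in> V \<Longrightarrow> u \<in> T \<Longrightarrow> prefix (u @ [False]) (leaf x) \<Longrightarrow>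
   prefix (u @ [True]) (leaf y) \<Longrightarrow>
   E x y \<longleftrightarrow> (nlc_label \<beta> \<alpha> leaf u x, nlc_label \<beta> \<alpha> leaf u y) \<in> R u"
  using nlc unfolding nlc_decomposition_def nlc_label_def by simp

lemma nlc_leaf: "x \<in> V \<Longrightarrow> leaf x \<in> tree_leaves T"
  using nlc_bij_leaves bij_betwE by blast

lemma nlc_leaf_in_tree: "x \<in> V \<Longrightarrow> leaf x \<in> T"
  using nlc_leaf unfolding tree_leaves_def by blast

lemma nlc_label_in_labels:
  assumes "u \<in> T" "x \<in> V" "strict_prefix u (leaf x)"
  shows "nlc_label \<beta> \<alpha> leaf u x \<in> Q"
  using nlc_relabel_in_labels[OF assms(1) nlc_leaf_in_tree[OF assms(2)]] nlc_initial_label assms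
  unfolding nlc_label_def by blast

lemma nlc_label_ancestor:
  assumes "w \<in> T" "u \<in> T" "strict_prefix w u" "x \<in> V" "strict_prefix u (leaf x)"
  shows "nlc_label \<beta> \<alpha> leaf w x = comp_path \<beta> (tree_path w u) (nlc_label \<beta> \<alpha> leaf u x)"
proof -
  have "leaf x \<in> T" "\<alpha> x \<in> Q"
    using assms(4) nlc_leaf_in_tree nlc_initial_label by auto
  moreover have "strict_prefix w (leaf x)"
    using assms(3,5) by (rule prefix_order.less_trans)
  ultimately have "nlc_label \<beta> \<alpha> leaf w x = comp_path \<beta> (tree_path w (leaf x)) (\<alpha> x)"
    using nlc_comp_path assms(1) unfolding nlc_label_def by simp
  also have "\<dots> = comp_path \<beta> (tree_path w u) (comp_path \<beta> (tree_path u (leaf x)) (\<alpha> x))"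
    using comp_path_tree_path_trans[of w u "leaf x" \<beta>] assms(3,5)
    by (simp add: prefix_order.less_imp_le)
  also have "comp_path \<beta> (tree_path u (leaf x)) (\<alpha> x) = nlc_label \<beta> \<alpha> leaf u x"
    using nlc_comp_path assms(2,5) \<open>leaf x \<in> T\<close> \<open>\<alpha> x \<in> Q\<close> unfolding nlc_label_def by simp
  finally show ?thesis .
qed

text \<open>Two vertices below a node u carrying the same label at u have the same neighbours outside
  the subtree of u: the edge to such a neighbour is decided by (nlc2) at the node where the
  paths diverge, and (nlc1) transports the equal labels up to that node.\<close>

lemma nlc_label_twins:
  assumes G: "graph V E" and "u \<in> T" "x \<in> V" "x' \<in> V" "y \<in> V"
    and below: "strict_prefix u (leaf x)" "strict_prefix u (leaf x')"
    and not_below: "\<not> prefix u (leaf y)"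
    and same: "nlc_label \<beta> \<alpha> leaf u x = nlc_label \<beta> \<alpha> leaf u x'"
    and "E x y"
  shows "E x' y"
proof -
  have "\<not> strict_prefix (leaf y) u"
    using nlc_leaf[OF \<open>y \<in> V\<close>] \<open>u \<in> T\<close> unfolding tree_leaves_def by blast
  with not_below have "u \<parallel> leaf y"
    by (auto simp: parallel_def strict_prefix_def)
  then obtain w b c us ys where "b \<noteq> c" "u = w @ b # us" "leaf y = w @ c # ys"
    using parallel_decomp[OF \<open>u \<parallel> leaf y\<close>] by blast
  then have "strict_prefix w u" and wb_u: "prefix (w @ [b]) u"
    and wb_y: "prefix (w @ [\<not> b]) (leaf y)"
    by (auto simp: strict_prefix_def)
  then have "w \<in> T"
    using \<open>u \<in> T\<close> nlc_prefix_closed prefix_order.less_imp_le by blast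
  have same_w: "nlc_label \<beta> \<alpha> leaf w x = nlc_label \<beta> \<alpha> leaf w x'"
    using nlc_label_ancestor[OF \<open>w \<in> T\<close> \<open>u \<in> T\<close> \<open>strict_prefix w u\<close>] assms(3,4) below same
    by simp
  have wb_x: "prefix (w @ [b]) (leaf x)" "prefix (w @ [b]) (leaf x')"
    using wb_u below prefix_order.order_trans prefix_order.less_imp_le by blast+
  show ?thesis
  proof (cases b)
    case True
    then have "E y x \<longleftrightarrow> E y x'"
      using nlc_edge[of y x w] nlc_edge[of y x' w] wb_x wb_y same_w assms(3-5) \<open>w \<in> T\<close>
      by simp
    with graph_sym[OF G \<open>E x y\<close>] show ?thesis
      by (blast intro: graph_sym[OF G])
  next
    case False
    then show ?thesis
      using nlc_edge[of x y w] nlc_edge[of x' y w] wb_x wb_y same_w assms(3-5) \<open>w \<in> T\<close> \<open>E x y\<close>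
      by simp
  qed
qed

lemma nlc_strict_prefix_leaf:
  "u \<notin> tree_leaves T \<Longrightarrow> x \<in> V \<Longrightarrow> prefix u (leaf x) \<Longrightarrow> strict_prefix u (leaf x)"
  using nlc_leaf[of x] by (auto simp: strict_prefix_def)

lemma nlc_entry_classes_subtree:
  assumes G: "graph V E" and u: "u \<in> T - tree_leaves T"
  defines "X \<equiv> points_below leaf V u"
  shows "entry_classes V E X ((\<lambda>i. {z \<in> X. nlc_label \<beta> \<alpha> leaf u z = i}) ` Q)"
  unfolding entry_classes_def
proof (intro ballI impI)
  fix y x
  assume "y \<in> V - X" "x \<in> X" "E y x"
  have below: "\<And>z. z \<in> X \<Longrightarrow> z \<in> V \<and> strict_prefix u (leaf z)"
    using nlc_strict_prefix_leaf u unfolding X_def points_below_def by blast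
  let ?C = "{z \<in> X. nlc_label \<beta> \<alpha> leaf u z = nlc_label \<beta> \<alpha> leaf u x}"
  have C: "?C \<in> (\<lambda>i. {z \<in> X. nlc_label \<beta> \<alpha> leaf u z = i}) ` Q"
    using nlc_label_in_labels below[OF \<open>x \<in> X\<close>] u by (intro image_eqI[OF refl]) blast
  have adj: "E y z" if "z \<in> ?C" for z
  proof -
    have "E z y"
      using nlc_label_twins[OF G, of u x z y] below[of x] below[of z] that \<open>x \<in> X\<close>
        \<open>y \<in> V - X\<close> graph_sym[OF G \<open>E y x\<close>] u unfolding X_def points_below_def by simp
    then show ?thesis by (rule graph_sym[OF G])
  qed
  show "\<exists>C\<in>(\<lambda>i. {z \<in> X. nlc_label \<beta> \<alpha> leaf u z = i}) ` Q. x \<in> C \<and> (\<forall>z\<in>C \<inter> X. E y z)"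
    using adj \<open>x \<in> X\<close> by (intro bexI[OF _ C]) blast
qed

lemma nlc_entry_classes_outside:
  assumes G: "graph V E" and u: "u \<in> T - tree_leaves T"
  defines "X \<equiv> points_below leaf V u"
  shows "entry_classes V E (V - X)
    ((\<lambda>i. {z \<in> V - X. \<exists>x\<in>X. nlc_label \<beta> \<alpha> leaf u x = i \<and> E x z}) ` Q)"
  unfolding entry_classes_def
proof (intro ballI impI)
  fix y x
  assume "y \<in> V - (V - X)" "x \<in> V - X" "E y x"
  then have "y \<in> X"
    unfolding X_def points_below_def by blast
  have below: "\<And>z. z \<in> X \<Longrightarrow> z \<in> V \<and> strict_prefix u (leaf z)"
    using nlc_strict_prefix_leaf u unfolding X_def points_below_def by blast
  let ?C = "{z \<in> V - X. \<exists>x\<in>X. nlc_label \<beta> \<alpha> leaf u x = nlc_label \<beta> \<alpha> leaf u y \<and> E x z}"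
  have C: "?C \<in> (\<lambda>i. {z \<in> V - X. \<exists>x\<in>X. nlc_label \<beta> \<alpha> leaf u x = i \<and> E x z}) ` Q"
    using nlc_label_in_labels below[OF \<open>y \<in> X\<close>] u by (intro image_eqI[OF refl]) blast
  have x: "x \<in> ?C"
    using \<open>y \<in> X\<close> \<open>x \<in> V - X\<close> \<open>E y x\<close> by blast
  have adj: "E y z" if z: "z \<in> ?C" for z
  proof -
    obtain x' where "x' \<in> X" "nlc_label \<beta> \<alpha> leaf u x' = nlc_label \<beta> \<alpha> leaf u y" "E x' z"
      using z by auto
    then show ?thesis
      using nlc_label_twins[OF G, of u x' y z] below[of x'] below[of y] \<open>y \<in> X\<close> z u
      unfolding X_def points_below_def by simp
  qed
  show "\<exists>C\<in>(\<lambda>i. {z \<in> V - X. \<exists>x\<in>X. nlc_label \<beta> \<alpha> leaf u x = i \<and> E x z}) ` Q.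
      x \<in> C \<and> (\<forall>z\<in>C \<inter> (V - X). E y z)"
    using adj by (intro bexI[OF _ C] conjI x) blast
qed

end

lemma unisolable_pair_not_two_shattered:
  assumes "a \<in> S \<inter> X" "b \<in> S - X"
    and a: "\<forall>c r. c \<notin> X \<longrightarrow> a \<in> ball V E c r \<longrightarrow> (\<exists>a'\<in>S \<inter> X - {a}. a' \<in> ball V E c r)"
    and b: "\<forall>c r. c \<notin> V - X \<longrightarrow> b \<in> ball V E c r \<longrightarrow> (\<exists>b'\<in>S - X - {b}. b' \<in> ball V E c r)"
  shows "\<not> two_shattered (ball_edges V E) S"
proof
  assume "two_shattered (ball_edges V E) S"
  moreover have "a \<in> S" "b \<in> S" "a \<noteq> b"
    using assms(1,2) by auto
  ultimately obtain c r where ab: "ball V E c r \<inter> S = {a, b}"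
    unfolding two_shattered_def ball_edges_def by blast
  then have in_ball: "a \<in> ball V E c r" "b \<in> ball V E c r"
    by auto
  show False
  proof (cases "c \<in> X")
    case True
    then obtain b' where "b' \<in> S - X - {b}" "b' \<in> ball V E c r"
      using b in_ball(2) by blast
    with ab assms(1) show False
      by auto
  next
    case False
    then obtain a' where "a' \<in> S \<inter> X - {a}" "a' \<in> ball V E c r"
      using a in_ball(1) by blast
    with ab assms(2) show False
      by auto
  qed
qed

lemma two_shattered_balls_card_le:
  assumes nlc: "nlc_decomposition V E T leaf Q \<alpha> \<beta> R" and G: "graph V E"
    and S: "S \<subseteq> V" "two_shattered (ball_edges V E) S"
  shows "card S \<le> 3 * card Q"
proof (rule ccontr)
  assume "\<not> ?thesis"
  then have big: "3 * card Q < card S"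
    by simp
  have "finite S"
    using G S(1) finite_subset unfolding graph_def by blast
  have "finite Q"
    using nlc_finite_labels[OF nlc] .
  have "S \<noteq> {}"
    using big by auto
  then have "0 < card Q"
    using S(1) nlc_initial_label[OF nlc] \<open>finite Q\<close> card_gt_0_iff by blast
  have leaves: "leaf ` S \<subseteq> tree_leaves T" "inj_on leaf S"
    using S(1) nlc_leaf[OF nlc] nlc_bij_leaves[OF nlc] inj_on_subset
    unfolding bij_betw_def by blast+
  have "card Q < card S"
    using big by simp
  obtain u where u: "u \<in> T - tree_leaves T"
    and A_big: "card Q < card (points_below leaf S u)"
    and A_small: "card (points_below leaf S u) \<le> 2 * card Q"
    using exists_balanced_subtree[OF nlc_finite_tree[OF nlc] nlc_root[OF nlc]
        _ leaves \<open>finite S\<close> \<open>0 < card Q\<close> \<open>card Q < card S\<close>] nlc_prefix_closed[OF nlc]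
    by blast
  define X where "X = points_below leaf V u"
  have A_eq: "S \<inter> X = points_below leaf S u"
    using S(1) unfolding X_def points_below_def by blast
  have "card S = card (S \<inter> X) + card (S - X)"
    using \<open>finite S\<close> by (rule card_Int_Diff)
  then have B_big: "card Q < card (S - X)"
    using big A_small A_eq by simp
  have classes_small: "card (f ` Q) < card M" if "card Q < card M" for f :: "nat \<Rightarrow> 'a set" and M
    using card_image_le[OF \<open>finite Q\<close>, of f] that by linarith
  have "X \<subseteq> V" "S \<inter> X \<subseteq> X" "V - X \<subseteq> V" "S - X \<subseteq> V - X"
    using S(1) unfolding X_def points_below_def by auto
  obtain a where "a \<in> S \<inter> X" and a_unisolable:
    "\<forall>c r. c \<notin> X \<longrightarrow> a \<in> ball V E c r \<longrightarrow> (\<exists>a'\<in>S \<inter> X - {a}. a' \<in> ball V E c r)"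
    using exists_unisolable_from_outside[OF nlc_entry_classes_subtree[OF nlc G u, folded X_def]
        finite_imageI[OF \<open>finite Q\<close>] classes_small] A_big A_eq \<open>X \<subseteq> V\<close> \<open>S \<inter> X \<subseteq> X\<close>
    by metis
  obtain b where "b \<in> S - X" and b_unisolable:
    "\<forall>c r. c \<notin> V - X \<longrightarrow> b \<in> ball V E c r \<longrightarrow> (\<exists>b'\<in>S - X - {b}. b' \<in> ball V E c r)"
    using exists_unisolable_from_outside[OF nlc_entry_classes_outside[OF nlc G u, folded X_def]
        finite_imageI[OF \<open>finite Q\<close>] classes_small] B_big \<open>V - X \<subseteq> V\<close> \<open>S - X \<subseteq> V - X\<close>
    by blast
  from unisolable_pair_not_two_shattered[OF \<open>a \<in> S \<inter> X\<close> \<open>b \<in> S - X\<close> a_unisolable b_unisolable] S(2)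
  show False ..
qed

lemma comp_path_id: "comp_path (\<lambda>_ q. q) xs = id"
  by (induction "\<lambda>_::bool list set. \<lambda>q::nat. q" xs rule: comp_path.induct) (auto simp: id_def)

lemma tree_leaves_prefix_closure:
  assumes "\<And>l. l \<in> L \<Longrightarrow> length l = n"
  shows "tree_leaves {p. \<exists>l\<in>L. prefix p l} = L"
proof -
  have "\<not> strict_prefix l p" if "l \<in> L" "prefix p l'" "l' \<in> L" for l p l'
    using assms[OF that(1)] assms[OF that(3)] prefix_length_le[OF that(2)] prefix_length_less
    by fastforce
  then show ?thesis
    unfolding tree_leaves_def by (fastforce simp: strict_prefix_def)
qed

lemma finite_prefix_closure: "finite L \<Longrightarrow> finite {p. \<exists>l\<in>L. prefix p l}"
proof -
  assume "finite L"
  moreover have "{p. \<exists>l\<in>L. prefix p l} = (\<Union>l\<in>L. set (prefixes l))"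
    unfolding set_prefixes_eq by blast
  ultimately show ?thesis
    by simp
qed

lemma exists_inj_on_same_length:
  assumes "finite V"
  shows "\<exists>enc :: 'a \<Rightarrow> bool list. \<exists>n. inj_on enc V \<and> (\<forall>x\<in>V. length (enc x) = n)"
proof -
  obtain idx where idx: "bij_betw idx V {0..<card V}"
    using ex_bij_betw_finite_nat[OF assms] by blast
  define enc where "enc x = replicate (idx x) True @ replicate (card V - idx x) False" for x
  have count: "length (filter id (enc x)) = idx x" for x
    unfolding enc_def by simp
  have "inj_on enc V"
  proof (rule inj_onI)
    fix x y assume "x \<in> V" "y \<in> V" "enc x = enc y"
    then have "idx x = idx y"
      using count by metis
    then show "x = y"
      using inj_onD[OF bij_betw_imp_inj_on[OF idx]] \<open>x \<in> V\<close> \<open>y \<in> V\<close> by blast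
  qed
  moreover have "length (enc x) = card V" if "x \<in> V" for x
    using bij_betw_apply[OF idx that] unfolding enc_def by simp
  ultimately show ?thesis
    by blast
qed

lemma nlc_decomposition_exists:
  assumes G: "graph V E" and "V \<noteq> {}"
  shows "\<exists>T leaf Q \<alpha> \<beta> R. nlc_decomposition V E T leaf Q \<alpha> \<beta> R"
proof -
  have "finite V"
    using G unfolding graph_def by blast
  define n where "n = card V"
  obtain idx where idx: "bij_betw idx V {0..<n}"
    using ex_bij_betw_finite_nat[OF \<open>finite V\<close>] unfolding n_def by blast
  then have idx_less: "idx x < n" if "x \<in> V" for x
    using bij_betw_apply[OF idx that] by simp
  obtain leaf :: "'a \<Rightarrow> bool list" and m where "inj_on leaf V" and "\<forall>x\<in>V. length (leaf x) = m"
    using exists_inj_on_same_length[OF \<open>finite V\<close>] by blast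
  define T where "T = {p. \<exists>l\<in>leaf ` V. prefix p l}"
  define R :: "bool list \<Rightarrow> (nat \<times> nat) set" where "R u = {(idx x, idx y) | x y. E x y}" for u
  have "tree_leaves T = leaf ` V"
    unfolding T_def using \<open>\<forall>x\<in>V. length (leaf x) = m\<close>
    by (intro tree_leaves_prefix_closure[of _ m]) blast
  with \<open>inj_on leaf V\<close> have "bij_betw leaf V (tree_leaves T)"
    by (simp add: bij_betw_def)
  moreover have "finite T"
    unfolding T_def using \<open>finite V\<close> by (intro finite_prefix_closure) simp
  moreover have "[] \<in> T"
    unfolding T_def using \<open>V \<noteq> {}\<close> Nil_prefix by blast
  moreover have "\<forall>v\<in>T. \<forall>u. prefix u v \<longrightarrow> u \<in> T"
  proof (intro ballI allI impI)
    fix v u assume "v \<in> T" "prefix u v"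
    then obtain x where "x \<in> V" "prefix v (leaf x)"
      unfolding T_def by blast
    with \<open>prefix u v\<close> show "u \<in> T"
      unfolding T_def using prefix_order.trans[of u v "leaf x"] by blast
  qed
  moreover have "\<forall>u\<in>T. R u \<subseteq> {0..<n} \<times> {0..<n}"
    using graph_edge_in_vertices[OF G] idx_less unfolding R_def by fastforce
  moreover have "E x y \<longleftrightarrow> (idx x, idx y) \<in> R u" if "x \<in> V" "y \<in> V" for x y u
  proof
    assume "(idx x, idx y) \<in> R u"
    then obtain x' y' where "idx x = idx x'" "idx y = idx y'" "E x' y'"
      unfolding R_def by blast
    moreover have "x' \<in> V" "y' \<in> V"
      using graph_edge_in_vertices[OF G \<open>E x' y'\<close>] by simp_all
    ultimately show "E x y"
      using inj_onD[OF bij_betw_imp_inj_on[OF idx]] that by metis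
  qed (auto simp: R_def)
  moreover have "\<forall>u\<in>T. \<forall>v\<in>T. strict_prefix u v \<longrightarrow>
      (\<forall>q\<in>{0..<n}. comp_path (\<lambda>_ q. q) (tree_path u v) q = q)"
    by (simp add: comp_path_id)
  ultimately have "nlc_decomposition V E T leaf {0..<n} idx (\<lambda>_ q. q) R"
    unfolding nlc_decomposition_def using idx_less by simp
  then show ?thesis
    by blast
qed

lemma nlc_width_attained:
  assumes "graph V E" "V \<noteq> {}"
  obtains T leaf Q \<alpha> \<beta> R
  where "nlc_decomposition V E T leaf Q \<alpha> \<beta> R" "card Q = nlc_width V E"
proof -
  let ?P = "\<lambda>k. \<exists>T leaf Q \<alpha> \<beta> R. nlc_decomposition V E T leaf Q \<alpha> \<beta> R \<and> card Q = k"
  obtain T leaf Q \<alpha> \<beta> R where "nlc_decomposition V E T leaf Q \<alpha> \<beta> R"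
    using nlc_decomposition_exists[OF assms] by (elim exE)
  then have "?P (card Q)"
    by blast
  then have "?P (Least ?P)"
    by (rule LeastI)
  then show ?thesis
    by (elim exE conjE) (rule that, simp_all add: nlc_width_def)
qed

lemma vc2_dim_le:
  assumes "finite V" "\<And>S. S \<subseteq> V \<Longrightarrow> two_shattered H S \<Longrightarrow> card S \<le> k"
  shows "vc2_dim V H \<le> k"
  unfolding vc2_dim_def
proof (rule Max.boundedI)
  have "{card S |S. S \<subseteq> V \<and> two_shattered H S} \<subseteq> card ` Pow V"
    by blast
  then show "finite {card S |S. S \<subseteq> V \<and> two_shattered H S}"
    using assms(1) finite_subset by blast
  have "two_shattered H {}"
    unfolding two_shattered_def by simp
  then show "{card S |S. S \<subseteq> V \<and> two_shattered H S} \<noteq> {}"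
    by blast
  fix m
  assume "m \<in> {card S |S. S \<subseteq> V \<and> two_shattered H S}"
  then obtain S where "m = card S" "S \<subseteq> V" "two_shattered H S"
    by blast
  then show "m \<le> k"
    using assms(2) by simp
qed

theorem propositionA1:
  fixes V :: "'a set" and E :: "'a \<Rightarrow> 'a \<Rightarrow> bool" and t :: nat
  assumes "t \<ge> 1"
    and "graph V E"
    and "nlc_width V E \<le> t"
  shows "vc2_dim V (ball_edges V E) \<le> 6 * t + 2"
proof (rule vc2_dim_le)
  show "finite V"
    using assms(2) unfolding graph_def by blast
  fix S assume S: "S \<subseteq> V" "two_shattered (ball_edges V E) S"
  show "card S \<le> 6 * t + 2"
  proof (cases "S = {}")
    case False
    with S(1) have "V \<noteq> {}"
      by blast
    then obtain T leaf Q \<alpha> \<beta> R where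
      nlc: "nlc_decomposition V E T leaf Q \<alpha> \<beta> R" and "card Q = nlc_width V E"
      by (rule nlc_width_attained[OF assms(2)])
    \<comment> \<open>This is the sharper bound 3 t.\<close>
    have "card S \<le> 3 * card Q"
      using two_shattered_balls_card_le[OF nlc assms(2) S] .
    with \<open>card Q = nlc_width V E\<close> assms(3) show ?thesis
      by linarith
  qed simp
qed

end
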